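(* Let $\Gamma$ be a Deza graph with parameters $(n,k,k-1,a)$, $k>1$, $\beta=1$. The set of $NA$-vertices of $\Gamma$ can be partitioned into quadruples of the form $\{x,x',x_b,x_b'\}$, where $x_b'=(x')_b=(x_b)'$.
   Context: A Deza graph with parameters $(n,k,b,a)$, $a\le b$, is a $k$-regular graph on $n$ vertices in which any two distinct vertices have $a$ or $b$ common neighbours; $\beta$ is the number of vertices $u\ne v$ with exactly $b$ common neighbours with a given vertex $v$. Since $\beta=1$, for each vertex $x$ let $x_b$ denote the unique vertex having $b=k-1$ common neighbours with $x$. A vertex $x$ is an $A$-vertex if $x$ is adjacent to $x_b$, and an $NA$-vertex otherwise. For an $NA$-vertex $x$, $x'$ denotes the unique neighbour of $x$ not adjacent to $x_b$; one has $(x')_b=(x_b)'$, denoted $x_b'$. *)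

theory Defs
  imports Main
begin

definition common_nbrs :: "'a set \<Rightarrow> ('a \<Rightarrow> 'a \<Rightarrow> bool) \<Rightarrow> 'a \<Rightarrow> 'a \<Rightarrow> nat" where
  "common_nbrs V E u v = card {w \<in> V. E u w \<and> E v w}"

definition deza_graph :: "'a set \<Rightarrow> ('a \<Rightarrow> 'a \<Rightarrow> bool) \<Rightarrow> nat \<Rightarrow> nat \<Rightarrow> nat \<Rightarrow> nat \<Rightarrow> bool" where
  "deza_graph V E n k b a \<longleftrightarrow>
     finite V \<and> card V = n \<and>
     (\<forall>u v. E u v \<longrightarrow> u \<in> V \<and> v \<in> V) \<and>
     (\<forall>u v. E u v \<longrightarrow> E v u) \<and>
     (\<forall>v. \<not> E v v) \<and>
     (\<forall>v\<in>V. card {w \<in> V. E v w} = k) \<and>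
     a \<le> b \<and>
     (\<forall>u\<in>V. \<forall>v\<in>V. u \<noteq> v \<longrightarrow> common_nbrs V E u v = a \<or> common_nbrs V E u v = b)"

definition deza_beta :: "'a set \<Rightarrow> ('a \<Rightarrow> 'a \<Rightarrow> bool) \<Rightarrow> nat \<Rightarrow> 'a \<Rightarrow> nat" where
  "deza_beta V E b v = card {u \<in> V. u \<noteq> v \<and> common_nbrs V E v u = b}"

text \<open>x_b: the unique vertex having b common neighbours with x (meaningful when beta = 1).\<close>
definition bvert :: "'a set \<Rightarrow> ('a \<Rightarrow> 'a \<Rightarrow> bool) \<Rightarrow> nat \<Rightarrow> 'a \<Rightarrow> 'a" where
  "bvert V E b x = (THE u. u \<in> V \<and> u \<noteq> x \<and> common_nbrs V E x u = b)"

definition A_vertex :: "'a set \<Rightarrow> ('a \<Rightarrow> 'a \<Rightarrow> bool) \<Rightarrow> nat \<Rightarrow> 'a \<Rightarrow> bool" where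
  "A_vertex V E b x \<longleftrightarrow> x \<in> V \<and> E x (bvert V E b x)"

definition NA_vertex :: "'a set \<Rightarrow> ('a \<Rightarrow> 'a \<Rightarrow> bool) \<Rightarrow> nat \<Rightarrow> 'a \<Rightarrow> bool" where
  "NA_vertex V E b x \<longleftrightarrow> x \<in> V \<and> \<not> E x (bvert V E b x)"

definition nprime :: "'a set \<Rightarrow> ('a \<Rightarrow> 'a \<Rightarrow> bool) \<Rightarrow> nat \<Rightarrow> 'a \<Rightarrow> 'a" where
  "nprime V E b x = (THE y. y \<in> V \<and> E x y \<and> \<not> E y (bvert V E b x))"

end

theory Submission
  imports Defs
begin

text \<open>Counting the walks of length three between two vertices in two ways shows that
  \<open>v\<close> is adjacent to \<open>u\<^sub>b\<close> iff \<open>u\<close> is adjacent to \<open>v\<^sub>b\<close>; together with \<open>(x\<^sub>b)\<^sub>b = x\<close> this makes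
  \<open>x \<mapsto> x\<^sub>b\<close> an automorphism of order two. Since \<open>x\<close> and \<open>x\<^sub>b\<close> share \<open>k - 1\<close> of their \<open>k\<close>
  neighbours, every vertex \<open>x\<close> has a unique neighbour \<open>x'\<close> not adjacent to \<open>x\<^sub>b\<close> (for an
  A-vertex it is \<open>x\<^sub>b\<close>), and the automorphism gives \<open>(x')\<^sub>b = (x\<^sub>b)'\<close> and \<open>x'' = x\<close>. An A-vertex
  is adjacent to \<open>x\<^sub>b\<close> and to nothing else outside the neighbourhood of \<open>x\<^sub>b\<close>, which forces
  \<open>x'\<close> to be an NA-vertex whenever \<open>x\<close> is. So the set \<open>{x, x', x\<^sub>b, x\<^sub>b'}\<close> is closed under
  both involutions, and these sets partition the NA-vertices.\<close>

lemma card_Collect_eq_1_ex1: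
  assumes "card {x \<in> A. P x} = 1" shows "\<exists>!x. x \<in> A \<and> P x"
proof -
  obtain y where "{x \<in> A. P x} = {y}"
    using assms card_1_singletonE by blast
  then have "x \<in> A \<and> P x \<longleftrightarrow> x = y" for x
    by (metis (no_types, lifting) mem_Collect_eq singleton_iff)
  then show ?thesis by simp
qed

lemma classes_partition:
  assumes "\<And>x. x \<in> S \<Longrightarrow> x \<in> Q x"
    and "\<And>x z. x \<in> S \<Longrightarrow> z \<in> Q x \<Longrightarrow> z \<in> S \<and> Q z = Q x"
  shows "\<Union>(Q ` S) = S" and "\<forall>A\<in>Q ` S. \<forall>B\<in>Q ` S. A \<noteq> B \<longrightarrow> A \<inter> B = {}"
proof -
  show "\<Union>(Q ` S) = S"
    using assms by blast
  have "Q x = Q y" if "x \<in> S" "y \<in> S" "z \<in> Q x" "z \<in> Q y" for x y z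
    using assms(2)[OF that(1,3)] assms(2)[OF that(2,4)] by simp
  then show "\<forall>A\<in>Q ` S. \<forall>B\<in>Q ` S. A \<noteq> B \<longrightarrow> A \<inter> B = {}"
    by (auto simp: disjoint_iff)
qed

lemma common_nbrs_commute: "common_nbrs V E u v = common_nbrs V E v u"
  unfolding common_nbrs_def by (simp add: conj_commute)

lemma sum_common_nbrs_nbrs_swap:
  assumes "finite V" and sym: "\<And>u v. E u v \<Longrightarrow> E v u"
  shows "(\<Sum>z\<in>{z\<in>V. E v z}. common_nbrs V E z u) = (\<Sum>w\<in>{w\<in>V. E u w}. common_nbrs V E v w)"
proof -
  have "(\<Sum>z\<in>{z\<in>V. E v z}. common_nbrs V E z u)
      = (\<Sum>z\<in>{z\<in>V. E v z}. \<Sum>w\<in>{w. w \<in> {w\<in>V. E u w} \<and> E z w}. 1::nat)"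
    unfolding common_nbrs_def by (auto intro!: sum.cong arg_cong[where f = card])
  also have "\<dots> = (\<Sum>w\<in>{w\<in>V. E u w}. \<Sum>z\<in>{z. z \<in> {z\<in>V. E v z} \<and> E z w}. 1::nat)"
    using assms(1) by (intro sum.swap_restrict) auto
  also have "\<dots> = (\<Sum>w\<in>{w\<in>V. E u w}. common_nbrs V E v w)"
    unfolding common_nbrs_def using sym by (auto intro!: sum.cong arg_cong[where f = card])
  finally show ?thesis .
qed

locale deza_beta_one =
  fixes V :: "'a set" and E :: "'a \<Rightarrow> 'a \<Rightarrow> bool" and n k a :: nat
  assumes deza: "deza_graph V E n k (k - 1) a"
    and k_gt_1: "k > 1"
    and beta_one: "\<forall>v\<in>V. deza_beta V E (k - 1) v = 1"
begin

abbreviation "bv x \<equiv> bvert V E (k - 1) x"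
abbreviation "np x \<equiv> nprime V E (k - 1) x"
abbreviation "nbrs v \<equiv> {w \<in> V. E v w}"

lemma finite_V: "finite V"
  using deza unfolding deza_graph_def by blast

lemma adj_in_V: "E u v \<Longrightarrow> u \<in> V \<and> v \<in> V"
  using deza unfolding deza_graph_def by blast

lemma adj_commute: "E u v \<longleftrightarrow> E v u"
  using deza unfolding deza_graph_def by blast

lemma adj_irrefl: "\<not> E v v"
  using deza unfolding deza_graph_def by blast

lemma card_nbrs: "v \<in> V \<Longrightarrow> card (nbrs v) = k"
  using deza unfolding deza_graph_def by blast

lemma a_le: "a \<le> k - 1"
  using deza unfolding deza_graph_def by blast

lemma common_nbrs_cases:
  "u \<in> V \<Longrightarrow> v \<in> V \<Longrightarrow> u \<noteq> v \<Longrightarrow> common_nbrs V E u v = a \<or> common_nbrs V E u v = k - 1"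
  using deza unfolding deza_graph_def by blast

lemma common_nbrs_self: "v \<in> V \<Longrightarrow> common_nbrs V E v v = k"
  unfolding common_nbrs_def using card_nbrs by simp

lemma ex1_b_partner:
  assumes "v \<in> V" shows "\<exists>!u. u \<in> V \<and> u \<noteq> v \<and> common_nbrs V E v u = k - 1"
proof (rule card_Collect_eq_1_ex1)
  show "card {u \<in> V. u \<noteq> v \<and> common_nbrs V E v u = k - 1} = 1"
    using beta_one assms unfolding deza_beta_def by blast
qed

lemma bv_props:
  assumes "v \<in> V"
  shows bv_in_V: "bv v \<in> V" and bv_neq: "bv v \<noteq> v"
    and common_nbrs_bv: "common_nbrs V E v (bv v) = k - 1"
  using theI'[OF ex1_b_partner[OF assms]] unfolding bvert_def by blast+

lemma bv_eqI:
  assumes "v \<in> V" "u \<in> V" "u \<noteq> v" "common_nbrs V E v u = k - 1" shows "bv v = u"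
  using ex1_b_partner[OF assms(1)] bv_props[OF assms(1)] assms(2-4) by blast

lemma bv_bv: assumes "v \<in> V" shows "bv (bv v) = v"
proof (rule bv_eqI[OF bv_in_V[OF assms] assms])
  show "v \<noteq> bv v" using bv_neq[OF assms] by simp
  show "common_nbrs V E (bv v) v = k - 1"
    using common_nbrs_bv[OF assms] common_nbrs_commute[of V E v] by simp
qed

lemma a_less: assumes "v \<in> V" shows "a < k - 1"
proof (rule ccontr)
  assume "\<not> a < k - 1"
  then have "{u \<in> V. u \<noteq> v \<and> common_nbrs V E v u = k - 1} = V - {v}"
    using common_nbrs_cases[OF assms] a_le by auto
  then have "card (V - {v}) = 1"
    using beta_one assms unfolding deza_beta_def by auto
  moreover have "card (nbrs v) \<le> card (V - {v})"
    using finite_V adj_irrefl by (intro card_mono) auto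
  ultimately show False
    using card_nbrs[OF assms] k_gt_1 by simp
qed

lemma common_nbrs_eq:
  assumes "z \<in> V" "u \<in> V"
  shows "common_nbrs V E z u
    = a + (if z = u then k - a else 0) + (if z = bv u then k - 1 - a else 0)"
proof -
  consider "z = u" | "z = bv u" | "z \<noteq> u" "z \<noteq> bv u" by blast
  then show ?thesis
  proof cases
    case 1
    then show ?thesis using common_nbrs_self[OF assms(2)] bv_neq[OF assms(2)] a_le by auto
  next
    case 2
    then show ?thesis
      using common_nbrs_bv[OF assms(2)] bv_neq[OF assms(2)] common_nbrs_commute[of V E u] a_le
      by auto
  next
    case 3
    then have "common_nbrs V E u z \<noteq> k - 1"
      using bv_eqI[OF assms(2,1)] by blast
    then have "common_nbrs V E z u = a"
      using common_nbrs_cases[OF assms] 3 common_nbrs_commute[of V E z u] by auto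
    then show ?thesis using 3 by simp
  qed
qed

lemma sum_common_nbrs_nbrs:
  assumes "v \<in> V" "u \<in> V"
  shows "(\<Sum>z\<in>nbrs v. common_nbrs V E z u)
    = k * a + (if E v u then k - a else 0) + (if E v (bv u) then k - 1 - a else 0)"
proof -
  have fin: "finite (nbrs v)" using finite_V by simp
  have "(\<Sum>z\<in>nbrs v. common_nbrs V E z u)
      = (\<Sum>z\<in>nbrs v. a + (if z = u then k - a else 0) + (if z = bv u then k - 1 - a else 0))"
    by (rule sum.cong[OF refl]) (simp add: common_nbrs_eq assms(2))
  also have "\<dots> = (\<Sum>z\<in>nbrs v. a) + (\<Sum>z\<in>nbrs v. if z = u then k - a else 0)
      + (\<Sum>z\<in>nbrs v. if z = bv u then k - 1 - a else 0)"
    by (simp only: sum.distrib)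
  also have "\<dots> = k * a + (if E v u then k - a else 0) + (if E v (bv u) then k - 1 - a else 0)"
    using card_nbrs[OF assms(1)] assms(2) bv_in_V[OF assms(2)] by (simp only: sum.delta[OF fin]) simp
  finally show ?thesis .
qed

lemma adj_bv_swap:
  assumes "v \<in> V" "u \<in> V"
  shows "E v (bv u) \<longleftrightarrow> E u (bv v)"
proof -
  have "(\<Sum>z\<in>nbrs v. common_nbrs V E z u) = (\<Sum>w\<in>nbrs u. common_nbrs V E v w)"
    using sum_common_nbrs_nbrs_swap[OF finite_V] adj_commute by blast
  also have "\<dots> = (\<Sum>w\<in>nbrs u. common_nbrs V E w v)"
    by (intro sum.cong refl common_nbrs_commute)
  finally show ?thesis
    using sum_common_nbrs_nbrs[OF assms] sum_common_nbrs_nbrs[OF assms(2,1)] a_less[OF assms(1)]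
      adj_commute
    by (auto split: if_splits)
qed

lemma adj_bv_bv: assumes "E v w" shows "E (bv v) (bv w)"
proof -
  have V: "v \<in> V" "w \<in> V" using adj_in_V[OF assms] by auto
  have "E v (bv (bv w)) \<longleftrightarrow> E (bv w) (bv v)"
    using adj_bv_swap[OF V(1) bv_in_V[OF V(2)]] .
  then show ?thesis using assms bv_bv[OF V(2)] adj_commute by simp
qed

lemma ex1_nbr_not_adj_bv: assumes "v \<in> V" shows "\<exists>!y. y \<in> V \<and> E v y \<and> \<not> E y (bv v)"
proof (rule card_Collect_eq_1_ex1)
  have "nbrs v \<inter> nbrs (bv v) = {w \<in> V. E v w \<and> E (bv v) w}"
    by blast
  then have "card (nbrs v \<inter> nbrs (bv v)) = k - 1"
    using common_nbrs_bv[OF assms] unfolding common_nbrs_def by simp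
  then have "card (nbrs v - nbrs (bv v)) = 1"
    using card_Diff_subset_Int[of "nbrs v" "nbrs (bv v)"] finite_V card_nbrs[OF assms] k_gt_1
    by simp
  moreover have "nbrs v - nbrs (bv v) = {y \<in> V. E v y \<and> \<not> E y (bv v)}"
    using adj_commute by auto
  ultimately show "card {y \<in> V. E v y \<and> \<not> E y (bv v)} = 1" by simp
qed

lemma np_props:
  assumes "v \<in> V"
  shows np_in_V: "np v \<in> V" and adj_np: "E v (np v)" and not_adj_np_bv: "\<not> E (np v) (bv v)"
  using theI'[OF ex1_nbr_not_adj_bv[OF assms]] unfolding nprime_def by blast+

lemma np_eqI:
  assumes "v \<in> V" "E v y" "\<not> E y (bv v)" shows "np v = y"
  using ex1_nbr_not_adj_bv[OF assms(1)] np_props[OF assms(1)] adj_in_V[OF assms(2)] assms(2,3)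
  by blast

lemma bv_np: assumes "v \<in> V" shows "bv (np v) = np (bv v)"
proof -
  have "\<not> E (bv (np v)) v"
  proof
    assume "E (bv (np v)) v"
    then have "E (bv (bv (np v))) (bv v)" by (rule adj_bv_bv)
    then show False using bv_bv[OF np_in_V[OF assms]] not_adj_np_bv[OF assms] by simp
  qed
  then have "np (bv v) = bv (np v)"
    using np_eqI[OF bv_in_V[OF assms] adj_bv_bv[OF adj_np[OF assms]]] bv_bv[OF assms] by simp
  then show ?thesis by simp
qed

lemma np_np: assumes "v \<in> V" shows "np (np v) = v"
proof (rule np_eqI[OF np_in_V[OF assms]])
  show "E (np v) v" using adj_np[OF assms] adj_commute by blast
  show "\<not> E v (bv (np v))"
    using not_adj_np_bv[OF bv_in_V[OF assms]] bv_bv[OF assms] bv_np[OF assms] adj_commute by metis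
qed

lemma NA_vertex_iff: "NA_vertex V E (k - 1) x \<longleftrightarrow> x \<in> V \<and> \<not> E x (bv x)"
  unfolding NA_vertex_def by simp

lemma NA_vertex_bv: "NA_vertex V E (k - 1) x \<Longrightarrow> NA_vertex V E (k - 1) (bv x)"
  unfolding NA_vertex_iff using bv_in_V bv_bv adj_commute by metis

lemma NA_vertex_np: assumes "NA_vertex V E (k - 1) x" shows "NA_vertex V E (k - 1) (np x)"
proof -
  have x: "x \<in> V" "\<not> E x (bv x)" using assms NA_vertex_iff by auto
  have "\<not> E (np x) (bv (np x))"
  proof
    assume A: "E (np x) (bv (np x))"
    have "np (np x) = bv (np x)"
      using np_eqI[OF np_in_V[OF x(1)] A] adj_irrefl by blast
    then show False
      using np_np[OF x(1)] bv_np[OF x(1)] adj_np[OF bv_in_V[OF x(1)]] x(2) adj_commute by metis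
  qed
  then show ?thesis using np_in_V[OF x(1)] NA_vertex_iff by blast
qed

definition quad :: "'a \<Rightarrow> 'a set" where
  "quad x = {x, np x, bv x, bv (np x)}"

lemma quad_np: assumes "x \<in> V" shows "quad (np x) = quad x"
  unfolding quad_def np_np[OF assms] by auto

lemma quad_bv: assumes "x \<in> V" shows "quad (bv x) = quad x"
proof -
  have "np (bv x) = bv (np x)" "bv (bv (np x)) = np x"
    using bv_np[OF assms] bv_bv[OF np_in_V[OF assms]] by simp_all
  then show ?thesis
    unfolding quad_def bv_bv[OF assms] by auto
qed

lemma quad_closed:
  assumes "NA_vertex V E (k - 1) x" "z \<in> quad x"
  shows "NA_vertex V E (k - 1) z \<and> quad z = quad x"
proof -
  have x: "x \<in> V" and npx: "NA_vertex V E (k - 1) (np x)"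
    using assms(1) NA_vertex_iff NA_vertex_np by auto
  then have "quad (bv (np x)) = quad x"
    using quad_bv[OF np_in_V[OF x]] quad_np[OF x] by simp
  moreover have "z = x \<or> z = np x \<or> z = bv x \<or> z = bv (np x)"
    using assms(2) unfolding quad_def by blast
  ultimately show ?thesis
    using assms(1) npx NA_vertex_bv quad_np[OF x] quad_bv[OF x] by auto
qed

lemma card_quad: assumes "NA_vertex V E (k - 1) x" shows "card (quad x) = 4"
proof -
  have x: "x \<in> V" "\<not> E x (bv x)" using assms NA_vertex_iff by auto
  have "x \<noteq> np x" using adj_np[OF x(1)] adj_irrefl by metis
  moreover have "bv x \<noteq> bv (np x)"
    using calculation bv_bv[OF x(1)] bv_bv[OF np_in_V[OF x(1)]] by metis
  moreover have "x \<noteq> bv (np x)"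
    using bv_np[OF x(1)] adj_np[OF bv_in_V[OF x(1)]] x(2) adj_commute by metis
  moreover have "np x \<noteq> bv x" using adj_np[OF x(1)] x(2) by metis
  moreover have "x \<noteq> bv x" "np x \<noteq> bv (np x)"
    using bv_neq[OF x(1)] bv_neq[OF np_in_V[OF x(1)]] by auto
  ultimately show ?thesis
    unfolding quad_def by auto
qed

end

theorem lemma14:
  fixes V :: "'a set" and E :: "'a \<Rightarrow> 'a \<Rightarrow> bool" and n k a :: nat
  assumes "deza_graph V E n k (k - 1) a"
    and "k > 1"
    and "\<forall>v\<in>V. deza_beta V E (k - 1) v = 1"
  shows "\<exists>P. \<Union>P = {x. NA_vertex V E (k - 1) x} \<and>
             (\<forall>Q\<in>P. \<forall>R\<in>P. Q \<noteq> R \<longrightarrow> Q \<inter> R = {}) \<and>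
             (\<forall>Q\<in>P. card Q = 4 \<and>
                (\<exists>x\<in>Q. Q = {x, nprime V E (k - 1) x, bvert V E (k - 1) x,
                             bvert V E (k - 1) (nprime V E (k - 1) x)} \<and>
                        bvert V E (k - 1) (nprime V E (k - 1) x)
                          = nprime V E (k - 1) (bvert V E (k - 1) x)))"
proof -
  interpret deza_beta_one V E n k a
    using assms by unfold_locales
  let ?NA = "{x. NA_vertex V E (k - 1) x}"
  have self: "x \<in> quad x" for x
    unfolding quad_def by simp
  have closed: "z \<in> ?NA \<and> quad z = quad x" if "x \<in> ?NA" "z \<in> quad x" for x z
    using quad_closed[of x z] that by blast
  have quad_shape:
    "card (quad x) = 4 \<and> (\<exists>y\<in>quad x. quad x = {y, np y, bv y, bv (np y)} \<and> bv (np y) = np (bv y))"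
    if "x \<in> ?NA" for x
  proof (intro conjI bexI[of _ x])
    show "card (quad x) = 4" using card_quad that by simp
    show "bv (np x) = np (bv x)" using bv_np that NA_vertex_iff by simp
  qed (simp_all add: quad_def)
  show ?thesis
  proof (intro exI[of _ "quad ` ?NA"] conjI)
    show "\<Union>(quad ` ?NA) = ?NA"
      by (rule classes_partition(1)[OF self closed])
    show "\<forall>Q\<in>quad ` ?NA. \<forall>R\<in>quad ` ?NA. Q \<noteq> R \<longrightarrow> Q \<inter> R = {}"
      by (rule classes_partition(2)[OF self closed])
    show "\<forall>Q\<in>quad ` ?NA. card Q = 4 \<and>
        (\<exists>y\<in>Q. Q = {y, np y, bv y, bv (np y)} \<and> bv (np y) = np (bv y))"
      using quad_shape by blast
  qed
qed

end
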